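(* For $k \geq 1$, assume $\mathbf{z}_{k-1} \in \hat{Z}_{k-1} = \{\hat{\mathbf{G}}_{k-1}, \hat{\mathbf{c}}_{k-1}, \hat{\mathbf{A}}_{k-1}, \hat{\mathbf{b}}_{k-1}\}$ and $\mathbf{w}_{k-1}, \mathbf{w}_k \in W = \{\mathbf{G}_w, \mathbf{c}_w, \mathbf{A}_w, \mathbf{b}_w\}$. Consider the transformed descriptor system $\tilde{\mathbf{z}}_k = \tilde{\mathbf{A}} \mathbf{z}_{k-1} + \tilde{\mathbf{B}} \mathbf{u}_{k-1} + \tilde{\mathbf{B}}_w \mathbf{w}_{k-1}$, $\mathbf{0} = \check{\mathbf{A}} \mathbf{z}_{k-1} + \check{\mathbf{B}} \mathbf{u}_{k-1} + \check{\mathbf{B}}_w \mathbf{w}_{k-1}$, $\mathbf{y}_k = \mathbf{C}\mathbf{T}\mathbf{z}_k + \mathbf{D}\mathbf{u}_k + \mathbf{D}_v \mathbf{v}_k$. If there exists a known constrained zonotope $X_a = \{\mathbf{G}_a, \mathbf{c}_a, \mathbf{A}_a, \mathbf{b}_a\} \subset \mathbb{R}^n$ with $\mathbf{x}_k \in X_a$ for all $k \geq 0$, then $\mathbf{z}_k \in \bar{Z}_k = \{\bar{\mathbf{G}}_k, \bar{\mathbf{c}}_k, \bar{\mathbf{A}}_k, \bar{\mathbf{b}}_k\}$, with \[ \bar{\mathbf{G}}_k = \begin{bmatrix} \tilde{\mathbf{A}} \hat{\mathbf{G}}_{k-1} & \tilde{\mathbf{B}}_w \mathbf{G}_w & \mathbf{0}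 & \mathbf{0}\\ \mathbf{0} & \mathbf{0} & \check{\mathbf{G}}_a & \mathbf{0}\end{bmatrix},\quad \bar{\mathbf{c}}_k = \begin{bmatrix} \tilde{\mathbf{A}} \hat{\mathbf{c}}_{k-1} + \tilde{\mathbf{B}} \mathbf{u}_{k-1} + \tilde{\mathbf{B}}_w \mathbf{c}_w \\ \check{\mathbf{c}}_a\end{bmatrix}, \] \[ \bar{\mathbf{A}}_k = \begin{bmatrix} \mathrm{blkdiag}(\hat{\mathbf{A}}_{k-1}, \mathbf{A}_w, \mathbf{A}_a, \mathbf{A}_w) \\ \begin{bmatrix} \check{\mathbf{A}} \begin{bmatrix} \tilde{\mathbf{A}} \hat{\mathbf{G}}_{k-1} \\ \mathbf{0} \end{bmatrix} & \check{\mathbf{A}} \begin{bmatrix} \tilde{\mathbf{B}}_w \mathbf{G}_w \\ \mathbf{0} \end{bmatrix} & \check{\mathbf{A}} \begin{bmatrix} \mathbf{0} \\ \check{\mathbf{G}}_a \end{bmatrix} & \check{\mathbf{B}}_w \mathbf{G}_w \end{bmatrix} \end{bmatrix}, \] (the first block row is the block-diagonal matrix spanning all four column blocks, the second block row is the given row of four blocks), \[ \bar{\mathbf{b}}_k = \begin{bmatrix} [\hat{\mathbf{b}}_{k-1}^T \;\; \mathbf{b}_w^T \;\; \mathbf{b}_a^T \;\; \mathbf{b}_w^T]^T \\ -\check{\mathbf{A}} \begin{bmatrix} \tilde{\mathbf{A}} \hat{\mathbf{c}}_{k-1} + \tilde{\mathbf{B}} \mathbf{u}_{k-1} + \tilde{\mathbf{B}}_w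 \mathbf{c}_w \\ \check{\mathbf{c}}_a\end{bmatrix} - \check{\mathbf{B}} \mathbf{u}_k - \check{\mathbf{B}}_w \mathbf{c}_w \end{bmatrix}. \]
   Context: A constrained zonotope is $Z = \{\mathbf{G}_z,\mathbf{c}_z,\mathbf{A}_z,\mathbf{b}_z\} = \{\mathbf{c}_z + \mathbf{G}_z\boldsymbol{\xi} : \|\boldsymbol{\xi}\|_\infty \le 1,\ \mathbf{A}_z\boldsymbol{\xi} = \mathbf{b}_z\}$. Consider the linear discrete-time descriptor system $\mathbf{E}\mathbf{x}_k = \mathbf{A}\mathbf{x}_{k-1} + \mathbf{B}\mathbf{u}_{k-1} + \mathbf{B}_w\mathbf{w}_{k-1}$, $\mathbf{y}_k = \mathbf{C}\mathbf{x}_k + \mathbf{D}\mathbf{u}_k + \mathbf{D}_v\mathbf{v}_k$ with $\mathbf{E} \in \mathbb{R}^{n\times n}$ possibly singular. Let $\mathbf{E} = \mathbf{U}\boldsymbol{\Sigma}\mathbf{V}^T$ be an SVD with $\boldsymbol{\Sigma} = \mathrm{blkdiag}(\tilde{\boldsymbol{\Sigma}},\mathbf{0})$, $\tilde{\boldsymbol{\Sigma}} \in \mathbb{R}^{n_z\times n_z}$ diagonal containing the $n_z = \mathrm{rank}(\mathbf{E})$ nonzero singular values, $\mathbf{T} = (\mathbf{V}^T)^{-1}$, and $\mathbf{z}_k = (\tilde{\mathbf{z}}_k,\check{\mathbf{z}}_k) = \mathbf{T}^{-1}\mathbf{x}_k$ with $\tilde{\mathbf{z}}_k \in \mathbb{R}^{n_z}$.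 The matrices are defined by $[\tilde{\mathbf{A}};\check{\mathbf{A}}] = \mathrm{blkdiag}(\tilde{\boldsymbol{\Sigma}}^{-1},\mathbf{I})\mathbf{U}^{-1}\mathbf{A}\mathbf{T}$, $[\tilde{\mathbf{B}};\check{\mathbf{B}}] = \mathrm{blkdiag}(\tilde{\boldsymbol{\Sigma}}^{-1},\mathbf{I})\mathbf{U}^{-1}\mathbf{B}$, $[\tilde{\mathbf{B}}_w;\check{\mathbf{B}}_w] = \mathrm{blkdiag}(\tilde{\boldsymbol{\Sigma}}^{-1},\mathbf{I})\mathbf{U}^{-1}\mathbf{B}_w$, where tilde-blocks have $n_z$ rows. The static relation $\mathbf{0} = \check{\mathbf{A}}\mathbf{z} + \check{\mathbf{B}}\mathbf{u} + \check{\mathbf{B}}_w\mathbf{w}$ is shifted forward to hold at time $k$, i.e. $\check{\mathbf{A}}\mathbf{z}_k + \check{\mathbf{B}}\mathbf{u}_k + \check{\mathbf{B}}_w\mathbf{w}_k = \mathbf{0}$. With $Z_a = \mathbf{T}^{-1}X_a = \{\mathbf{T}^{-1}\mathbf{G}_a,\mathbf{T}^{-1}\mathbf{c}_a,\mathbf{A}_a,\mathbf{b}_a\}$, write $\mathbf{T}^{-1}\mathbf{c}_a = [\tilde{\mathbf{c}}_a^T\ \check{\mathbf{c}}_a^T]^T$ and $\mathbf{T}^{-1}\mathbf{G}_a = [\tilde{\mathbf{G}}_a^T\ \check{\mathbf{G}}_a^T]^T$ (split conformally with $(\tilde{\mathbf{z}},\check{\mathbf{z}})$). *)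

theory Defs
  imports "Jordan_Normal_Form.Matrix"
begin

definition cz :: "real mat \<Rightarrow> real vec \<Rightarrow> real mat \<Rightarrow> real vec \<Rightarrow> real vec set" where
  "cz G c Ac b = {c + G *\<^sub>v xi | xi. xi \<in> carrier_vec (dim_col G) \<and>
       (\<forall>i < dim_col G. \<bar>xi $ i\<bar> \<le> 1) \<and> Ac *\<^sub>v xi = b}"

definition hcat :: "real mat \<Rightarrow> real mat \<Rightarrow> real mat" where
  "hcat A B = four_block_mat A B (0\<^sub>m 0 (dim_col A)) (0\<^sub>m 0 (dim_col B))"

definition vcat :: "real mat \<Rightarrow> real mat \<Rightarrow> real mat" where
  "vcat A B = four_block_mat A (0\<^sub>m (dim_row A) 0) B (0\<^sub>m (dim_row B) 0)"

definition blkdiag :: "real mat \<Rightarrow> real mat \<Rightarrow> real mat" where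
  "blkdiag A B = four_block_mat A (0\<^sub>m (dim_row A) (dim_col B)) (0\<^sub>m (dim_row B) (dim_col A)) B"

definition top_rows :: "nat \<Rightarrow> real mat \<Rightarrow> real mat" where
  "top_rows r M = mat r (dim_col M) (\<lambda>(i,j). M $$ (i,j))"

definition bot_rows :: "nat \<Rightarrow> real mat \<Rightarrow> real mat" where
  "bot_rows r M = mat (dim_row M - r) (dim_col M) (\<lambda>(i,j). M $$ (r + i, j))"

end

theory Submission
  imports Defs
begin

(*
  Write z_k = (z~_k, z^_k) for its differential and algebraic parts. The differential part is
  an affine function of z_{k-1} and w_{k-1}, so it lies in the Minkowski sum of the linear
  images of Z^_{k-1} and W, shifted by the input term. The algebraic part is the lower block
  of T^{-1} x_k, so it lies in the projection of T^{-1} X_a. Hence z_k lies in the Cartesian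
  product of these two constrained zonotopes. The shifted static relation, with w_k in W, is
  then imposed as a generalized intersection: the factors of w_k become extra factors with
  zero generator columns, and the relation becomes the last block row of the constraints.
*)

definition unit_box :: "nat \<Rightarrow> real vec set" where
  "unit_box m = {\<xi> \<in> carrier_vec m. \<forall>i<m. \<bar>\<xi> $ i\<bar> \<le> 1}"

lemma unit_box_carrier: "\<xi> \<in> unit_box m \<Longrightarrow> \<xi> \<in> carrier_vec m"
  unfolding unit_box_def by simp

lemma append_in_unit_box:
  "\<xi> \<in> unit_box m1 \<Longrightarrow> \<eta> \<in> unit_box m2 \<Longrightarrow> \<xi> @\<^sub>v \<eta> \<in> unit_box (m1 + m2)"
  unfolding unit_box_def by auto

lemma mem_czI:
  assumes "G \<in> carrier_mat n m" "\<xi> \<in> unit_box m" "A *\<^sub>v \<xi> = b"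
  shows "c + G *\<^sub>v \<xi> \<in> cz G c A b"
  using assms unfolding cz_def unit_box_def by blast

lemma mem_czE:
  assumes "z \<in> cz G c A b" "G \<in> carrier_mat n m"
  obtains \<xi> where "\<xi> \<in> unit_box m" "A *\<^sub>v \<xi> = b" "z = c + G *\<^sub>v \<xi>"
  using assms unfolding cz_def unit_box_def by blast

lemma hcat_carrier_mat:
  "A \<in> carrier_mat r c1 \<Longrightarrow> B \<in> carrier_mat r c2 \<Longrightarrow> hcat A B \<in> carrier_mat r (c1 + c2)"
  unfolding hcat_def using four_block_carrier_mat[of A r c1 "0\<^sub>m 0 c2" 0 c2] by simp

lemma vcat_carrier_mat:
  "A \<in> carrier_mat r1 c \<Longrightarrow> B \<in> carrier_mat r2 c \<Longrightarrow> vcat A B \<in> carrier_mat (r1 + r2) c"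
  unfolding vcat_def using four_block_carrier_mat[of A r1 c "0\<^sub>m r2 0" r2 0] by simp

lemma blkdiag_carrier_mat:
  "A \<in> carrier_mat r1 c1 \<Longrightarrow> B \<in> carrier_mat r2 c2 \<Longrightarrow> blkdiag A B \<in> carrier_mat (r1 + r2) (c1 + c2)"
  unfolding blkdiag_def by simp

lemma top_rows_carrier_mat: "M \<in> carrier_mat r c \<Longrightarrow> top_rows m M \<in> carrier_mat m c"
  unfolding top_rows_def by auto

lemma bot_rows_carrier_mat: "M \<in> carrier_mat r c \<Longrightarrow> bot_rows m M \<in> carrier_mat (r - m) c"
  unfolding bot_rows_def by auto

lemma hcat_mult_append_vec:
  assumes "A \<in> carrier_mat r c1" "B \<in> carrier_mat r c2" "a \<in> carrier_vec c1" "b \<in> carrier_vec c2"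
  shows "hcat A B *\<^sub>v (a @\<^sub>v b) = A *\<^sub>v a + B *\<^sub>v b"
proof -
  have "hcat A B *\<^sub>v (a @\<^sub>v b) = (A *\<^sub>v a + B *\<^sub>v b) @\<^sub>v (0\<^sub>m 0 c1 *\<^sub>v a + 0\<^sub>m 0 c2 *\<^sub>v b)"
    unfolding hcat_def using assms by (subst four_block_mat_mult_vec) auto
  also have "\<dots> = A *\<^sub>v a + B *\<^sub>v b"
    by (intro eq_vecI) auto
  finally show ?thesis .
qed

lemma vcat_mult_vec:
  assumes "A \<in> carrier_mat r1 c" "B \<in> carrier_mat r2 c" "x \<in> carrier_vec c"
  shows "vcat A B *\<^sub>v x = A *\<^sub>v x @\<^sub>v B *\<^sub>v x"
proof -
  have "x = x @\<^sub>v 0\<^sub>v 0"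
    by (intro eq_vecI) auto
  then have "vcat A B *\<^sub>v x = vcat A B *\<^sub>v (x @\<^sub>v 0\<^sub>v 0)"
    by simp
  also have "\<dots> = (A *\<^sub>v x + 0\<^sub>m r1 0 *\<^sub>v 0\<^sub>v 0) @\<^sub>v (B *\<^sub>v x + 0\<^sub>m r2 0 *\<^sub>v 0\<^sub>v 0)"
    unfolding vcat_def using assms by (subst four_block_mat_mult_vec) auto
  also have "\<dots> = A *\<^sub>v x @\<^sub>v B *\<^sub>v x"
    using assms by (intro eq_vecI) (auto simp: scalar_prod_def)
  finally show ?thesis .
qed

lemma blkdiag_mult_append_vec:
  assumes "A \<in> carrier_mat r1 c1" "B \<in> carrier_mat r2 c2" "a \<in> carrier_vec c1" "b \<in> carrier_vec c2"
  shows "blkdiag A B *\<^sub>v (a @\<^sub>v b) = A *\<^sub>v a @\<^sub>v B *\<^sub>v b"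
  unfolding blkdiag_def using assms by (subst four_block_mat_mult_vec) auto

lemma vec_last_mult_mat_vec:
  assumes "M \<in> carrier_mat (p + q) m" "x \<in> carrier_vec m"
  shows "vec_last (M *\<^sub>v x) q = bot_rows p M *\<^sub>v x"
  unfolding bot_rows_def vec_last_def using assms
  by (intro eq_vecI) (auto simp: row_def intro!: arg_cong[where f="\<lambda>v. v \<bullet> x"] eq_vecI)

lemma append_vec_assoc: "(a @\<^sub>v b) @\<^sub>v c = a @\<^sub>v b @\<^sub>v c"
  by (intro eq_vecI) auto

lemma hcat_zero_mat: "hcat (0\<^sub>m r c1) (0\<^sub>m r c2) = 0\<^sub>m r (c1 + c2)"
  unfolding hcat_def by (intro eq_matI) auto

lemma vcat_zero_mat: "vcat (0\<^sub>m r1 c) (0\<^sub>m r2 c) = 0\<^sub>m (r1 + r2) c"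
  unfolding vcat_def by (intro eq_matI) auto

lemma blkdiag_eq_vcat_hcat:
  assumes "A \<in> carrier_mat r1 c1" "B \<in> carrier_mat r2 c2"
  shows "blkdiag A B = vcat (hcat A (0\<^sub>m r1 c2)) (hcat (0\<^sub>m r2 c1) B)"
  unfolding blkdiag_def vcat_def hcat_def using assms by (intro eq_matI) auto

lemma hcat_vcat_interchange:
  assumes "A \<in> carrier_mat r1 c1" "B \<in> carrier_mat r1 c2" "C \<in> carrier_mat r2 c1" "D \<in> carrier_mat r2 c2"
  shows "hcat (vcat A C) (vcat B D) = vcat (hcat A B) (hcat C D)"
  unfolding vcat_def hcat_def using assms by (intro eq_matI) auto

lemma mult_hcat:
  assumes "M \<in> carrier_mat r n" "A \<in> carrier_mat n c1" "B \<in> carrier_mat n c2"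
  shows "M * hcat A B = hcat (M * A) (M * B)"
proof -
  have M: "M = four_block_mat M (0\<^sub>m r 0) (0\<^sub>m 0 n) (0\<^sub>m 0 0)"
    using assms by (intro eq_matI) auto
  have AB: "hcat A B = four_block_mat A B (0\<^sub>m 0 c1) (0\<^sub>m 0 c2)"
    unfolding hcat_def using assms by auto
  have "M * hcat A B = four_block_mat (M * A + 0\<^sub>m r 0 * 0\<^sub>m 0 c1) (M * B + 0\<^sub>m r 0 * 0\<^sub>m 0 c2)
      (0\<^sub>m 0 n * A + 0\<^sub>m 0 0 * 0\<^sub>m 0 c1) (0\<^sub>m 0 n * B + 0\<^sub>m 0 0 * 0\<^sub>m 0 c2)"
    unfolding AB using assms by (subst M, intro mult_four_block_mat) auto
  also have "\<dots> = hcat (M * A) (M * B)"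
    unfolding hcat_def using assms by (intro eq_matI) auto
  finally show ?thesis .
qed

lemma hcat_blkdiag_zero_eq_vcat:
  assumes "P1 \<in> carrier_mat p m1" "P2 \<in> carrier_mat p m2" "Q \<in> carrier_mat q m3"
  shows "hcat (blkdiag (hcat P1 P2) Q) (0\<^sub>m (p + q) m4)
    = vcat (hcat (hcat (hcat P1 P2) (0\<^sub>m p m3)) (0\<^sub>m p m4))
           (hcat (hcat (hcat (0\<^sub>m q m1) (0\<^sub>m q m2)) Q) (0\<^sub>m q m4))"
proof -
  have P: "hcat P1 P2 \<in> carrier_mat p (m1 + m2)"
    using assms(1,2) by (rule hcat_carrier_mat)
  have "hcat (blkdiag (hcat P1 P2) Q) (0\<^sub>m (p + q) m4)
      = hcat (vcat (hcat (hcat P1 P2) (0\<^sub>m p m3)) (hcat (0\<^sub>m q (m1 + m2)) Q))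
             (vcat (0\<^sub>m p m4) (0\<^sub>m q m4))"
    by (simp only: blkdiag_eq_vcat_hcat[OF P assms(3)] vcat_zero_mat)
  also have "\<dots> = vcat (hcat (hcat (hcat P1 P2) (0\<^sub>m p m3)) (0\<^sub>m p m4))
                      (hcat (hcat (0\<^sub>m q (m1 + m2)) Q) (0\<^sub>m q m4))"
    by (rule hcat_vcat_interchange[OF hcat_carrier_mat[OF P zero_carrier_mat] zero_carrier_mat
          hcat_carrier_mat[OF zero_carrier_mat assms(3)] zero_carrier_mat])
  finally show ?thesis
    by (simp only: hcat_zero_mat)
qed

lemma blkdiag_hcat_eq_hcat_vcat:
  assumes "P1 \<in> carrier_mat p m1" "P2 \<in> carrier_mat p m2" "Q \<in> carrier_mat q m3"
  shows "blkdiag (hcat P1 P2) Q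
    = hcat (hcat (vcat P1 (0\<^sub>m q m1)) (vcat P2 (0\<^sub>m q m2))) (vcat (0\<^sub>m p m3) Q)"
proof -
  have P: "hcat P1 P2 \<in> carrier_mat p (m1 + m2)"
    using assms(1,2) by (rule hcat_carrier_mat)
  have "blkdiag (hcat P1 P2) Q
      = vcat (hcat (hcat P1 P2) (0\<^sub>m p m3)) (hcat (hcat (0\<^sub>m q m1) (0\<^sub>m q m2)) Q)"
    by (simp only: blkdiag_eq_vcat_hcat[OF P assms(3)] hcat_zero_mat)
  also have "\<dots> = hcat (vcat (hcat P1 P2) (hcat (0\<^sub>m q m1) (0\<^sub>m q m2))) (vcat (0\<^sub>m p m3) Q)"
    by (rule hcat_vcat_interchange[OF P zero_carrier_mat
          hcat_carrier_mat[OF zero_carrier_mat zero_carrier_mat] assms(3), symmetric])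
  also have "\<dots> = hcat (hcat (vcat P1 (0\<^sub>m q m1)) (vcat P2 (0\<^sub>m q m2))) (vcat (0\<^sub>m p m3) Q)"
    by (simp only: hcat_vcat_interchange[OF assms(1,2) zero_carrier_mat zero_carrier_mat])
  finally show ?thesis .
qed

lemma mem_cz_mult_mat_vec:
  assumes "z \<in> cz G c A b" "M \<in> carrier_mat r n" "G \<in> carrier_mat n m" "c \<in> carrier_vec n"
  shows "M *\<^sub>v z \<in> cz (M * G) (M *\<^sub>v c) A b"
proof -
  obtain \<xi> where \<xi>: "\<xi> \<in> unit_box m" "A *\<^sub>v \<xi> = b" "z = c + G *\<^sub>v \<xi>"
    using assms(1,3) by (rule mem_czE)
  then have "M *\<^sub>v z = M *\<^sub>v c + (M * G) *\<^sub>v \<xi>"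
    using assms unit_box_carrier by (auto simp: mult_add_distrib_mat_vec)
  also have "\<dots> \<in> cz (M * G) (M *\<^sub>v c) A b"
    using assms \<xi> by (intro mem_czI[of _ r m]) auto
  finally show ?thesis .
qed

lemma mem_cz_add_vec:
  assumes "z \<in> cz G c A b" "G \<in> carrier_mat n m" "c \<in> carrier_vec n" "d \<in> carrier_vec n"
  shows "z + d \<in> cz G (c + d) A b"
proof -
  obtain \<xi> where \<xi>: "\<xi> \<in> unit_box m" "A *\<^sub>v \<xi> = b" "z = c + G *\<^sub>v \<xi>"
    using assms(1,2) by (rule mem_czE)
  then have "z + d = (c + d) + G *\<^sub>v \<xi>"
    using assms by (intro eq_vecI) auto
  also have "\<dots> \<in> cz G (c + d) A b"
    using assms(2) \<xi>(1,2) by (rule mem_czI)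
  finally show ?thesis .
qed

lemma mem_cz_add:
  assumes "z1 \<in> cz G1 c1 A1 b1" "z2 \<in> cz G2 c2 A2 b2"
    "G1 \<in> carrier_mat n m1" "G2 \<in> carrier_mat n m2" "c1 \<in> carrier_vec n" "c2 \<in> carrier_vec n"
    "A1 \<in> carrier_mat p1 m1" "A2 \<in> carrier_mat p2 m2"
  shows "z1 + z2 \<in> cz (hcat G1 G2) (c1 + c2) (blkdiag A1 A2) (b1 @\<^sub>v b2)"
proof -
  obtain \<xi>1 where \<xi>1: "\<xi>1 \<in> unit_box m1" "A1 *\<^sub>v \<xi>1 = b1" "z1 = c1 + G1 *\<^sub>v \<xi>1"
    using assms(1,3) by (rule mem_czE)
  obtain \<xi>2 where \<xi>2: "\<xi>2 \<in> unit_box m2" "A2 *\<^sub>v \<xi>2 = b2" "z2 = c2 + G2 *\<^sub>v \<xi>2"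
    using assms(2,4) by (rule mem_czE)
  note carriers = unit_box_carrier[OF \<xi>1(1)] unit_box_carrier[OF \<xi>2(1)]
  have "z1 + z2 = (c1 + c2) + hcat G1 G2 *\<^sub>v (\<xi>1 @\<^sub>v \<xi>2)"
    using assms carriers \<xi>1 \<xi>2 by (subst hcat_mult_append_vec) (auto intro!: eq_vecI)
  also have "\<dots> \<in> cz (hcat G1 G2) (c1 + c2) (blkdiag A1 A2) (b1 @\<^sub>v b2)"
    using assms carriers \<xi>1 \<xi>2
    by (intro mem_czI[OF hcat_carrier_mat[OF assms(3,4)] append_in_unit_box[OF \<xi>1(1) \<xi>2(1)]])
      (simp add: blkdiag_mult_append_vec)
  finally show ?thesis .
qed

lemma mem_cz_append:
  assumes "z1 \<in> cz G1 c1 A1 b1" "z2 \<in> cz G2 c2 A2 b2"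
    "G1 \<in> carrier_mat n1 m1" "G2 \<in> carrier_mat n2 m2" "c1 \<in> carrier_vec n1" "c2 \<in> carrier_vec n2"
    "A1 \<in> carrier_mat p1 m1" "A2 \<in> carrier_mat p2 m2"
  shows "z1 @\<^sub>v z2 \<in> cz (blkdiag G1 G2) (c1 @\<^sub>v c2) (blkdiag A1 A2) (b1 @\<^sub>v b2)"
proof -
  obtain \<xi>1 where \<xi>1: "\<xi>1 \<in> unit_box m1" "A1 *\<^sub>v \<xi>1 = b1" "z1 = c1 + G1 *\<^sub>v \<xi>1"
    using assms(1,3) by (rule mem_czE)
  obtain \<xi>2 where \<xi>2: "\<xi>2 \<in> unit_box m2" "A2 *\<^sub>v \<xi>2 = b2" "z2 = c2 + G2 *\<^sub>v \<xi>2"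
    using assms(2,4) by (rule mem_czE)
  note carriers = unit_box_carrier[OF \<xi>1(1)] unit_box_carrier[OF \<xi>2(1)]
  have "z1 @\<^sub>v z2 = (c1 @\<^sub>v c2) + blkdiag G1 G2 *\<^sub>v (\<xi>1 @\<^sub>v \<xi>2)"
    using assms carriers \<xi>1 \<xi>2 by (simp add: blkdiag_mult_append_vec append_vec_add)
  also have "\<dots> \<in> cz (blkdiag G1 G2) (c1 @\<^sub>v c2) (blkdiag A1 A2) (b1 @\<^sub>v b2)"
    using assms carriers \<xi>1 \<xi>2
    by (intro mem_czI[OF blkdiag_carrier_mat[OF assms(3,4)] append_in_unit_box[OF \<xi>1(1) \<xi>2(1)]])
      (simp add: blkdiag_mult_append_vec)
  finally show ?thesis .
qed

lemma mem_cz_vec_last: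
  assumes "z \<in> cz G c A b" "G \<in> carrier_mat (p + q) m" "c \<in> carrier_vec (p + q)"
  shows "vec_last z q \<in> cz (bot_rows p G) (vec_last c q) A b"
proof -
  obtain \<xi> where \<xi>: "\<xi> \<in> unit_box m" "A *\<^sub>v \<xi> = b" "z = c + G *\<^sub>v \<xi>"
    using assms(1,2) by (rule mem_czE)
  then have "vec_last z q = vec_last c q + vec_last (G *\<^sub>v \<xi>) q"
    using assms unfolding vec_last_def by (intro eq_vecI) auto
  also have "\<dots> = vec_last c q + bot_rows p G *\<^sub>v \<xi>"
    using assms \<xi> unit_box_carrier by (simp add: vec_last_mult_mat_vec)
  also have "\<dots> \<in> cz (bot_rows p G) (vec_last c q) A b"
    using bot_rows_carrier_mat[OF assms(2)] \<xi>(1,2) by (rule mem_czI)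
  finally show ?thesis .
qed

lemma mem_cz_constrain:
  assumes "z \<in> cz G c A b" "w \<in> cz Gw cw Aw bw" "R *\<^sub>v z + e + S *\<^sub>v w = 0\<^sub>v r"
    "G \<in> carrier_mat n m" "c \<in> carrier_vec n" "A \<in> carrier_mat p m"
    "Gw \<in> carrier_mat nw mw" "cw \<in> carrier_vec nw" "Aw \<in> carrier_mat pw mw"
    "R \<in> carrier_mat r n" "S \<in> carrier_mat r nw" "e \<in> carrier_vec r"
  shows "z \<in> cz (hcat G (0\<^sub>m n mw)) c (vcat (blkdiag A Aw) (hcat (R * G) (S * Gw)))
     ((b @\<^sub>v bw) @\<^sub>v (- (R *\<^sub>v c) - e - S *\<^sub>v cw))"
proof -
  obtain \<xi> where \<xi>: "\<xi> \<in> unit_box m" "A *\<^sub>v \<xi> = b" "z = c + G *\<^sub>v \<xi>"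
    using assms(1,4) by (rule mem_czE)
  obtain \<eta> where \<eta>: "\<eta> \<in> unit_box mw" "Aw *\<^sub>v \<eta> = bw" "w = cw + Gw *\<^sub>v \<eta>"
    using assms(2,7) by (rule mem_czE)
  note carriers = unit_box_carrier[OF \<xi>(1)] unit_box_carrier[OF \<eta>(1)]
  have RG: "R * G \<in> carrier_mat r m" and SGw: "S * Gw \<in> carrier_mat r mw"
    using assms by auto
  have expanded: "R *\<^sub>v c + (R * G) *\<^sub>v \<xi> + e + (S *\<^sub>v cw + (S * Gw) *\<^sub>v \<eta>) = 0\<^sub>v r"
    using assms carriers \<xi> \<eta> by (simp add: mult_add_distrib_mat_vec)
  have relation: "(R * G) *\<^sub>v \<xi> + (S * Gw) *\<^sub>v \<eta> = - (R *\<^sub>v c) - e - S *\<^sub>v cw"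
  proof (rule eq_vecI)
    fix i
    assume "i < dim_vec (- (R *\<^sub>v c) - e - S *\<^sub>v cw)"
    then have i: "i < r"
      using assms by simp
    then have "(R *\<^sub>v c + (R * G) *\<^sub>v \<xi> + e + (S *\<^sub>v cw + (S * Gw) *\<^sub>v \<eta>)) $ i = 0"
      by (simp only: expanded index_zero_vec)
    then show "((R * G) *\<^sub>v \<xi> + (S * Gw) *\<^sub>v \<eta>) $ i = (- (R *\<^sub>v c) - e - S *\<^sub>v cw) $ i"
      using i assms carriers by simp
  qed (use assms in simp)
  have "vcat (blkdiag A Aw) (hcat (R * G) (S * Gw)) *\<^sub>v (\<xi> @\<^sub>v \<eta>)
      = blkdiag A Aw *\<^sub>v (\<xi> @\<^sub>v \<eta>) @\<^sub>v hcat (R * G) (S * Gw) *\<^sub>v (\<xi> @\<^sub>v \<eta>)"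
    using blkdiag_carrier_mat[OF assms(6,9)] hcat_carrier_mat[OF RG SGw] carriers
    by (intro vcat_mult_vec) auto
  also have "\<dots> = (b @\<^sub>v bw) @\<^sub>v (- (R *\<^sub>v c) - e - S *\<^sub>v cw)"
    using \<xi> \<eta> relation
    by (simp add: blkdiag_mult_append_vec[OF assms(6,9) carriers]
        hcat_mult_append_vec[OF RG SGw carriers])
  finally have constraints: "vcat (blkdiag A Aw) (hcat (R * G) (S * Gw)) *\<^sub>v (\<xi> @\<^sub>v \<eta>)
      = (b @\<^sub>v bw) @\<^sub>v (- (R *\<^sub>v c) - e - S *\<^sub>v cw)" .
  have "z = c + hcat G (0\<^sub>m n mw) *\<^sub>v (\<xi> @\<^sub>v \<eta>)"
    using assms carriers \<xi> by (subst hcat_mult_append_vec) auto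
  also have "\<dots> \<in> cz (hcat G (0\<^sub>m n mw)) c (vcat (blkdiag A Aw) (hcat (R * G) (S * Gw)))
     ((b @\<^sub>v bw) @\<^sub>v (- (R *\<^sub>v c) - e - S *\<^sub>v cw))"
    by (rule mem_czI[OF hcat_carrier_mat[OF assms(4) zero_carrier_mat]
          append_in_unit_box[OF \<xi>(1) \<eta>(1)] constraints])
  finally show ?thesis .
qed

lemma mem_cz_descriptor_step:
  assumes mats: "At \<in> carrier_mat nd (nd + na)" "Ac \<in> carrier_mat na (nd + na)"
      "Bt \<in> carrier_mat nd nu" "Bc \<in> carrier_mat na nu"
      "Bwt \<in> carrier_mat nd nw" "Bwc \<in> carrier_mat na nw"
    and sets: "Gh \<in> carrier_mat (nd + na) ngh" "ch \<in> carrier_vec (nd + na)" "Ah \<in> carrier_mat nch ngh"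
      "Gw \<in> carrier_mat nw ngw" "cw \<in> carrier_vec nw" "Aw \<in> carrier_mat ncw ngw"
      "Gac \<in> carrier_mat na nga" "cac \<in> carrier_vec na" "Aa \<in> carrier_mat nca nga"
    and inputs: "up \<in> carrier_vec nu" "uk \<in> carrier_vec nu"
    and state: "zk \<in> carrier_vec (nd + na)"
    and dynamics: "vec_first zk nd = At *\<^sub>v zp + Bt *\<^sub>v up + Bwt *\<^sub>v wp"
    and static: "Ac *\<^sub>v zk + Bc *\<^sub>v uk + Bwc *\<^sub>v wk = 0\<^sub>v na"
    and bounds: "zp \<in> cz Gh ch Ah bh" "wp \<in> cz Gw cw Aw bw" "wk \<in> cz Gw cw Aw bw"
      "vec_last zk na \<in> cz Gac cac Aa ba"
  shows "zk \<in> cz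
     (vcat (hcat (hcat (hcat (At * Gh) (Bwt * Gw)) (0\<^sub>m nd nga)) (0\<^sub>m nd ngw))
           (hcat (hcat (hcat (0\<^sub>m na ngh) (0\<^sub>m na ngw)) Gac) (0\<^sub>m na ngw)))
     ((At *\<^sub>v ch + Bt *\<^sub>v up + Bwt *\<^sub>v cw) @\<^sub>v cac)
     (vcat (blkdiag (blkdiag (blkdiag Ah Aw) Aa) Aw)
           (hcat (hcat (hcat (Ac * vcat (At * Gh) (0\<^sub>m na ngh))
                             (Ac * vcat (Bwt * Gw) (0\<^sub>m na ngw)))
                       (Ac * vcat (0\<^sub>m nd nga) Gac))
                 (Bwc * Gw)))
     ((bh @\<^sub>v bw @\<^sub>v ba @\<^sub>v bw) @\<^sub>v
        (- (Ac *\<^sub>v ((At *\<^sub>v ch + Bt *\<^sub>v up + Bwt *\<^sub>v cw) @\<^sub>v cac))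
         - Bc *\<^sub>v uk - Bwc *\<^sub>v cw))"
proof -
  let ?c = "At *\<^sub>v ch + Bt *\<^sub>v up + Bwt *\<^sub>v cw"
  have AGh: "At * Gh \<in> carrier_mat nd ngh" and BGw: "Bwt * Gw \<in> carrier_mat nd ngw"
    using mats sets by auto
  have "At *\<^sub>v zp + Bt *\<^sub>v up \<in> cz (At * Gh) (At *\<^sub>v ch + Bt *\<^sub>v up) Ah bh"
    using mats sets inputs by (intro mem_cz_add_vec mem_cz_mult_mat_vec[OF bounds(1)]) auto
  moreover have "Bwt *\<^sub>v wp \<in> cz (Bwt * Gw) (Bwt *\<^sub>v cw) Aw bw"
    using mats sets by (intro mem_cz_mult_mat_vec[OF bounds(2)]) auto
  ultimately have differential: "vec_first zk nd \<in> cz (hcat (At * Gh) (Bwt * Gw)) ?c (blkdiag Ah Aw) (bh @\<^sub>v bw)"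
    unfolding dynamics using mats sets inputs by (auto intro!: mem_cz_add)
  have "vec_first zk nd @\<^sub>v vec_last zk na \<in> cz (blkdiag (hcat (At * Gh) (Bwt * Gw)) Gac) (?c @\<^sub>v cac)
      (blkdiag (blkdiag Ah Aw) Aa) ((bh @\<^sub>v bw) @\<^sub>v ba)"
    by (rule mem_cz_append[OF differential bounds(4) hcat_carrier_mat[OF AGh BGw] sets(7) _ sets(8)
          blkdiag_carrier_mat[OF sets(3,6)] sets(9)]) (use mats sets inputs in auto)
  then have product: "zk \<in> cz (blkdiag (hcat (At * Gh) (Bwt * Gw)) Gac) (?c @\<^sub>v cac)
      (blkdiag (blkdiag Ah Aw) Aa) ((bh @\<^sub>v bw) @\<^sub>v ba)"
    by (simp only: vec_first_last_append[OF state])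
  from product have "zk \<in> cz (hcat (blkdiag (hcat (At * Gh) (Bwt * Gw)) Gac) (0\<^sub>m (nd + na) ngw)) (?c @\<^sub>v cac)
      (vcat (blkdiag (blkdiag (blkdiag Ah Aw) Aa) Aw)
            (hcat (Ac * blkdiag (hcat (At * Gh) (Bwt * Gw)) Gac) (Bwc * Gw)))
      ((((bh @\<^sub>v bw) @\<^sub>v ba) @\<^sub>v bw) @\<^sub>v (- (Ac *\<^sub>v (?c @\<^sub>v cac)) - Bc *\<^sub>v uk - Bwc *\<^sub>v cw))"
    using state mats sets inputs
    by (intro mem_cz_constrain[OF _ bounds(3) static]) (auto intro!: hcat_carrier_mat blkdiag_carrier_mat)
  moreover have "Ac * blkdiag (hcat (At * Gh) (Bwt * Gw)) Gac
      = hcat (hcat (Ac * vcat (At * Gh) (0\<^sub>m na ngh)) (Ac * vcat (Bwt * Gw) (0\<^sub>m na ngw)))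
             (Ac * vcat (0\<^sub>m nd nga) Gac)"
  proof -
    have V1: "vcat (At * Gh) (0\<^sub>m na ngh) \<in> carrier_mat (nd + na) ngh"
      and V2: "vcat (Bwt * Gw) (0\<^sub>m na ngw) \<in> carrier_mat (nd + na) ngw"
      and V3: "vcat (0\<^sub>m nd nga) Gac \<in> carrier_mat (nd + na) nga"
      using AGh BGw sets(7) by (auto intro: vcat_carrier_mat)
    show ?thesis
      by (simp only: blkdiag_hcat_eq_hcat_vcat[OF AGh BGw sets(7)]
          mult_hcat[OF mats(2) hcat_carrier_mat[OF V1 V2] V3] mult_hcat[OF mats(2) V1 V2])
  qed
  ultimately show ?thesis
    using AGh BGw sets by (simp add: hcat_blkdiag_zero_eq_vcat append_vec_assoc)
qed

theorem lemma1:
  fixes E A B Bw C D Dv U Uinv V Sig Sinv T Tinv :: "real mat"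
    and Ga Aa Gh Ah Gw Aw :: "real mat"
    and ca ba ch bh cw bw :: "real vec"
    and x z u w v y :: "nat \<Rightarrow> real vec"
    and n nz nu nw ny nv k nga nca ngh nch ngw ncw :: nat
    and At Ac Bt Bc Bwt Bwc Gac :: "real mat" and cac :: "real vec"
  assumes dims: "E \<in> carrier_mat n n" "A \<in> carrier_mat n n" "B \<in> carrier_mat n nu"
      "Bw \<in> carrier_mat n nw" "C \<in> carrier_mat ny n" "D \<in> carrier_mat ny nu"
      "Dv \<in> carrier_mat ny nv"
    \<comment> \<open>SVD of E: E = U Sigma V^T, Sigma = blkdiag(Sig, 0), Sig diagonal with the nz nonzero singular values\<close>
    and svd: "nz \<le> n" "U \<in> carrier_mat n n" "V \<in> carrier_mat n n"
      "transpose_mat U * U = 1\<^sub>m n" "U * transpose_mat U = 1\<^sub>m n"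
      "transpose_mat V * V = 1\<^sub>m n" "V * transpose_mat V = 1\<^sub>m n"
      "Sig \<in> carrier_mat nz nz" "diagonal_mat Sig" "\<forall>i<nz. Sig $$ (i,i) > 0"
      "E = U * blkdiag Sig (0\<^sub>m (n - nz) (n - nz)) * transpose_mat V"
    and inverses: "Uinv \<in> carrier_mat n n" "Uinv * U = 1\<^sub>m n" "U * Uinv = 1\<^sub>m n"
      "Sinv \<in> carrier_mat nz nz" "Sinv * Sig = 1\<^sub>m nz" "Sig * Sinv = 1\<^sub>m nz"
      "T \<in> carrier_mat n n" "T * transpose_mat V = 1\<^sub>m n" "transpose_mat V * T = 1\<^sub>m n"
      "Tinv \<in> carrier_mat n n" "Tinv * T = 1\<^sub>m n" "T * Tinv = 1\<^sub>m n"
    \<comment> \<open>transformed system matrices\<close>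
    defines "At \<equiv> top_rows nz (blkdiag Sinv (1\<^sub>m (n - nz)) * Uinv * A * T)"
      and "Ac \<equiv> bot_rows nz (blkdiag Sinv (1\<^sub>m (n - nz)) * Uinv * A * T)"
      and "Bt \<equiv> top_rows nz (blkdiag Sinv (1\<^sub>m (n - nz)) * Uinv * B)"
      and "Bc \<equiv> bot_rows nz (blkdiag Sinv (1\<^sub>m (n - nz)) * Uinv * B)"
      and "Bwt \<equiv> top_rows nz (blkdiag Sinv (1\<^sub>m (n - nz)) * Uinv * Bw)"
      and "Bwc \<equiv> bot_rows nz (blkdiag Sinv (1\<^sub>m (n - nz)) * Uinv * Bw)"
      and "Gac \<equiv> bot_rows nz (Tinv * Ga)"
      and "cac \<equiv> vec_last (Tinv *\<^sub>v ca) (n - nz)"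
  assumes sets: "Ga \<in> carrier_mat n nga" "ca \<in> carrier_vec n" "Aa \<in> carrier_mat nca nga"
      "ba \<in> carrier_vec nca"
      "Gh \<in> carrier_mat n ngh" "ch \<in> carrier_vec n" "Ah \<in> carrier_mat nch ngh"
      "bh \<in> carrier_vec nch"
      "Gw \<in> carrier_mat nw ngw" "cw \<in> carrier_vec nw" "Aw \<in> carrier_mat ncw ngw"
      "bw \<in> carrier_vec ncw"
    and signals: "\<forall>j. u j \<in> carrier_vec nu" "\<forall>j. w j \<in> carrier_vec nw"
      "\<forall>j. v j \<in> carrier_vec nv" "\<forall>j. z j \<in> carrier_vec n"
    \<comment> \<open>change of coordinates z = T^{-1} x\<close>
      "\<forall>j. z j = Tinv *\<^sub>v x j"
    \<comment> \<open>transformed descriptor system\<close>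
    and sys: "\<forall>j\<ge>1. vec_first (z j) nz = At *\<^sub>v z (j - 1) + Bt *\<^sub>v u (j - 1) + Bwt *\<^sub>v w (j - 1)"
      "\<forall>j\<ge>1. 0\<^sub>v (n - nz) = Ac *\<^sub>v z (j - 1) + Bc *\<^sub>v u (j - 1) + Bwc *\<^sub>v w (j - 1)"
      "\<forall>j. y j = (C * T) *\<^sub>v z j + D *\<^sub>v u j + Dv *\<^sub>v v j"
    \<comment> \<open>static relation shifted forward to time k\<close>
      "Ac *\<^sub>v z k + Bc *\<^sub>v u k + Bwc *\<^sub>v w k = 0\<^sub>v (n - nz)"
    and k: "k \<ge> 1"
    and prev: "z (k - 1) \<in> cz Gh ch Ah bh"
    and noise: "w (k - 1) \<in> cz Gw cw Aw bw" "w k \<in> cz Gw cw Aw bw"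
    and Xa: "\<forall>j. x j \<in> cz Ga ca Aa ba"
  shows "z k \<in> cz
     (vcat (hcat (hcat (hcat (At * Gh) (Bwt * Gw)) (0\<^sub>m nz nga)) (0\<^sub>m nz ngw))
           (hcat (hcat (hcat (0\<^sub>m (n - nz) ngh) (0\<^sub>m (n - nz) ngw)) Gac) (0\<^sub>m (n - nz) ngw)))
     ((At *\<^sub>v ch + Bt *\<^sub>v u (k - 1) + Bwt *\<^sub>v cw) @\<^sub>v cac)
     (vcat (blkdiag (blkdiag (blkdiag Ah Aw) Aa) Aw)
           (hcat (hcat (hcat (Ac * vcat (At * Gh) (0\<^sub>m (n - nz) ngh))
                             (Ac * vcat (Bwt * Gw) (0\<^sub>m (n - nz) ngw)))
                       (Ac * vcat (0\<^sub>m nz nga) Gac))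
                 (Bwc * Gw)))
     ((bh @\<^sub>v bw @\<^sub>v ba @\<^sub>v bw) @\<^sub>v
        (- (Ac *\<^sub>v ((At *\<^sub>v ch + Bt *\<^sub>v u (k - 1) + Bwt *\<^sub>v cw) @\<^sub>v cac))
         - Bc *\<^sub>v u k - Bwc *\<^sub>v cw))"
proof -
  have nz: "nz + (n - nz) = n"
    using svd(1) by simp
  have "blkdiag Sinv (1\<^sub>m (n - nz)) \<in> carrier_mat n n"
    using blkdiag_carrier_mat[OF inverses(4) one_carrier_mat[of "n - nz"]] nz by simp
  then have M: "blkdiag Sinv (1\<^sub>m (n - nz)) * Uinv \<in> carrier_mat n n"
    using inverses(1) by simp
  have mats: "At \<in> carrier_mat nz n" "Ac \<in> carrier_mat (n - nz) n"
      "Bt \<in> carrier_mat nz nu" "Bc \<in> carrier_mat (n - nz) nu"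
      "Bwt \<in> carrier_mat nz nw" "Bwc \<in> carrier_mat (n - nz) nw" "Gac \<in> carrier_mat (n - nz) nga"
    unfolding At_def Ac_def Bt_def Bc_def Bwt_def Bwc_def Gac_def
    using M dims(2-4) inverses(7,10) sets(1)
    by (meson top_rows_carrier_mat bot_rows_carrier_mat mult_carrier_mat)+
  have "Tinv *\<^sub>v x k \<in> cz (Tinv * Ga) (Tinv *\<^sub>v ca) Aa ba"
    using Xa inverses sets by (intro mem_cz_mult_mat_vec) auto
  then have algebraic: "vec_last (z k) (n - nz) \<in> cz Gac cac Aa ba"
    unfolding Gac_def cac_def using signals(5) inverses sets nz
    by (auto intro!: mem_cz_vec_last[where p = nz])
  show ?thesis
    by (rule mem_cz_descriptor_step[where nd = nz and na = "n - nz" and zp = "z (k - 1)"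
          and wp = "w (k - 1)" and wk = "w k"])
      (use mats sets signals sys k prev noise algebraic nz in \<open>auto simp: cac_def\<close>)
qed

end
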